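(* Let $g\ge 3$, $m_g=2g+2$, $h_g=\binom{m_g}{2}$, and let $(k,r)\in\Gamma_\psi$. Then: (i) if $k$ has a marking of weight at least $g+1$, then $r$ is not GIT-semistable; (ii) if $\mathrm{supp}(k)$ is reducible and, for some irreducible component of $\mathrm{supp}(k)$, the set of markings of $k$ lying on smooth points of $\mathrm{supp}(k)$ on that component consists of exactly one marking, of weight $1$, then $r$ is not GIT-semistable; (iii) if $\mathrm{supp}(k)$ is integral and all markings of $k$ have weight $1$, then $r\in V$.
   Context: We work over $\mathbb{C}$. Let $\mathcal C\to\mathbb{P}^5\cong|\mathcal O_{\mathbb{P}^2}(2)|$ be the universal plane conic and, for $m\ge 2$, let $\mathrm{Sym}^m_{\mathbb{P}^5}\mathcal C$ be the quotient of the $m$-fold fibre product $\mathcal C\times_{\mathbb{P}^5}\dots\times_{\mathbb{P}^5}\mathcal C$ by the symmetric group $S_m$, with projection $\rho$ to $\mathbb{P}^5$. For $k\in\mathrm{Sym}^m_{\mathbb{P}^5}\mathcal C$, $\mathrm{supp}(k)$ is the plane conic parametrized by $\rho(k)$; the distinct points of $k$ (a multiset of $m$ points on $\mathrm{supp}(k)$) are its markings, and the weight of a marking is the number of times it appears in $k$. $k$ is called degenerate if $\mathrm{supp}(k)$ is not integral. Let $\mathbb P_{h}=\mathrm{Sym}^{h}(\mathbb{P}^2)^\vee$ be the space of configurations of $h$ plane lines (with multiplicities), with its natural $SL(3)$-action and linearization; $\mathbb P_h^{ss}$ denotes the GIT-semistable points. Fix $g\ge3$, $m_g=2g+2$, $h_g=\binom{m_g}{2}$,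 and define the rational map $\psi\colon\mathrm{Sym}^{m_g}_{\mathbb{P}^5}\mathcal C\dashrightarrow\mathbb P_{h_g}$ as follows: if $k$ has distinct markings $p_1,\dots,p_r$ with weights $m_1,\dots,m_r$, then $\psi(k)$ is the configuration consisting of the line $\overline{p_ip_j}$ (spanned by $p_i,p_j$) with multiplicity $m_im_j$ for each $1\le i<j\le r$, together with the tangent line $\mathbb T_{p_h}\mathrm{supp}(k)$ with multiplicity $\binom{m_h}{2}$ for each $h$ with $m_h>1$. Let $\Gamma_\psi\subset\mathrm{Sym}^{m_g}_{\mathbb{P}^5}\mathcal C\times\mathbb P_{h_g}$ be the closure of the graph of $\psi$ and $p\colon\Gamma_\psi\to\mathbb P_{h_g}$ the second projection. Let $V$ be the set of $r\in p(\Gamma_\psi)\cap\mathbb P_{h_g}^{ss}$ such that there is no degenerate $k$ with $(k,r)\in\Gamma_\psi$. (Hilbert–Mumford criterion: $r\in\mathbb P_{h}$ is GIT-semistable iff $\max_{x\in\mathbb{P}^2}\mu_x(r)\le 2h/3$ and $\max_{l}\mu_l(r)\le h/3$, where $\mu_x(r)$ is the number of lines of $r$ through $x$ counted with multiplicity and $\mu_l(r)$ is the multiplicity of the line $l$ in $r$.) *)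

theory Defs
  imports "HOL-Analysis.Analysis"
begin

(* Points of P^2 and lines of (P^2)^dual are represented by nonzero vectors in complex^3;
   plane conics by nonzero symmetric 3x3 complex matrices (up to scalars).
   All predicates below are invariant under rescaling of representatives and
   reordering of lists. *)

definition bdot :: "complex^3 \<Rightarrow> complex^3 \<Rightarrow> complex" where
  "bdot x y = (\<Sum>i\<in>UNIV. x$i * y$i)"

definition qf :: "complex^3^3 \<Rightarrow> complex^3 \<Rightarrow> complex" where
  "qf A x = bdot x (A *v x)"

definition proj_eq :: "complex^3 \<Rightarrow> complex^3 \<Rightarrow> bool" where
  "proj_eq p q \<longleftrightarrow> (\<exists>c. c \<noteq> 0 \<and> q = c *s p)"

definition pcls :: "complex^3 \<Rightarrow> (complex^3) set" where
  "pcls v = {w. proj_eq v w}"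

(* coordinates of the line spanned by two distinct points *)
definition cross3 :: "complex^3 \<Rightarrow> complex^3 \<Rightarrow> complex^3" where
  "cross3 p q = vector [p$2*q$3 - p$3*q$2, p$3*q$1 - p$1*q$3, p$1*q$2 - p$2*q$1]"

(* k = (A, ps) represents a point of Sym^m_{P^5} C *)
definition valid_k :: "nat \<Rightarrow> complex^3^3 \<Rightarrow> (complex^3) list \<Rightarrow> bool" where
  "valid_k m A ps \<longleftrightarrow> A \<noteq> 0 \<and> transpose A = A \<and> length ps = m \<and>
     (\<forall>p\<in>set ps. p \<noteq> 0 \<and> qf A p = 0)"

(* r = L represents a configuration of h lines *)
definition valid_r :: "nat \<Rightarrow> (complex^3) list \<Rightarrow> bool" where
  "valid_r h L \<longleftrightarrow> length L = h \<and> (\<forall>l\<in>set L. l \<noteq> 0)"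

definition integral_conic :: "complex^3^3 \<Rightarrow> bool" where
  "integral_conic A \<longleftrightarrow> \<not> (\<exists>a b. \<forall>x. qf A x = bdot a x * bdot b x)"

definition line_pair :: "complex^3^3 \<Rightarrow> complex^3 \<Rightarrow> complex^3 \<Rightarrow> bool" where
  "line_pair A a b \<longleftrightarrow> a \<noteq> 0 \<and> b \<noteq> 0 \<and> \<not> proj_eq a b \<and>
     (\<forall>x. qf A x = bdot a x * bdot b x)"

definition reducible_conic :: "complex^3^3 \<Rightarrow> bool" where
  "reducible_conic A \<longleftrightarrow> (\<exists>a b. line_pair A a b)"

definition weight :: "(complex^3) list \<Rightarrow> complex^3 \<Rightarrow> nat" where
  "weight ps p = card {i. i < length ps \<and> proj_eq p (ps!i)}"

definition generic_k :: "complex^3^3 \<Rightarrow> (complex^3) list \<Rightarrow> bool" where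
  "generic_k A ps \<longleftrightarrow> integral_conic A \<and>
     (\<forall>i<length ps. \<forall>j<length ps. i \<noteq> j \<longrightarrow> \<not> proj_eq (ps!i) (ps!j))"

(* L represents psi(k) for generic k: the lines p_i p_j, i<j, each with multiplicity 1 *)
definition psi_rep :: "(complex^3) list \<Rightarrow> (complex^3) list \<Rightarrow> bool" where
  "psi_rep ps L \<longleftrightarrow> mset (map pcls L) =
     mset [pcls (cross3 (ps!i) (ps!j)). i \<leftarrow> [0..<length ps], j \<leftarrow> [Suc i..<length ps]]"

(* (k, r) in the closure of the graph of psi (classical closure = Zariski closure over C) *)
definition Gamma_psi :: "nat \<Rightarrow> complex^3^3 \<Rightarrow> (complex^3) list \<Rightarrow> (complex^3) list \<Rightarrow> bool" where
  "Gamma_psi m A ps L \<longleftrightarrow> valid_k m A ps \<and> valid_r (m choose 2) L \<and>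
     (\<exists>Qs Ps Ls. (\<forall>n. valid_k m (Qs n) (Ps n) \<and> generic_k (Qs n) (Ps n) \<and>
                       valid_r (m choose 2) (Ls n) \<and> psi_rep (Ps n) (Ls n)) \<and>
        Qs \<longlonglongrightarrow> A \<and>
        (\<forall>i<m. (\<lambda>n. Ps n ! i) \<longlonglongrightarrow> ps ! i) \<and>
        (\<forall>j<m choose 2. (\<lambda>n. Ls n ! j) \<longlonglongrightarrow> L ! j))"

definition mu_pt :: "(complex^3) list \<Rightarrow> complex^3 \<Rightarrow> nat" where
  "mu_pt L x = card {j. j < length L \<and> bdot (L!j) x = 0}"

definition mu_line :: "(complex^3) list \<Rightarrow> complex^3 \<Rightarrow> nat" where
  "mu_line L l = card {j. j < length L \<and> proj_eq l (L!j)}"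

(* GIT semistability via the Hilbert-Mumford criterion *)
definition semistable :: "(complex^3) list \<Rightarrow> bool" where
  "semistable L \<longleftrightarrow>
     (\<forall>x. x \<noteq> 0 \<longrightarrow> 3 * mu_pt L x \<le> 2 * length L) \<and>
     (\<forall>l. l \<noteq> 0 \<longrightarrow> 3 * mu_line L l \<le> length L)"

definition in_V :: "nat \<Rightarrow> (complex^3) list \<Rightarrow> bool" where
  "in_V m L \<longleftrightarrow> (\<exists>A ps. Gamma_psi m A ps L) \<and> semistable L \<and>
     \<not> (\<exists>A ps. Gamma_psi m A ps L \<and> \<not> integral_conic A)"

end

theory Submission
  imports Defs "HOL-Combinatorics.Permutations" "HOL-Library.Infinite_Set"
begin

text \<open>
  Pass to a subsequence of generic approximations along which the matching between the lines of
  \<open>\<psi>(k\<^sub>n)\<close> and the pairs of markings of \<open>k\<^sub>n\<close> is constant: in the limit each line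
  passes through the two markings of its label, and is their chord when they are distinct.
  Semistability then becomes a matter of counting labels.
  A marking of weight \<open>w\<close> lies on every line except those labelled by pairs avoiding its
  cluster, hence on at least \<open>C(m,2) - C(m-w,2)\<close> lines, which is too many once \<open>w > g\<close>.
  If one line of a line pair carries a single smooth marking \<open>j0\<close> of weight one, a line missing
  the heaviest marking \<open>y\<close> on the other line is labelled either by \<open>j0\<close> and a marking
  outside the cluster of \<open>y\<close>, or by two coinciding markings, and AM-GM bounds the number of
  such lines by \<open>m\<^sup>2/8\<close>.
  If the conic is integral and the markings are distinct, no three markings are collinear, so
  every line of \<open>L\<close> is a simple chord and at most \<open>3m/2\<close> lines pass through a point. The
  cluster count then shows that any other preimage of \<open>L\<close> has distinct markings; since no
  line of \<open>L\<close> is double, no three of them are collinear, so its support is integral too.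
\<close>

section \<open>Points and lines of the projective plane\<close>

lemma bdot_expand: "bdot x y = x$1 * y$1 + x$2 * y$2 + x$3 * y$3"
  by (simp add: bdot_def sum_3)

lemma cross3_nth:
  "cross3 p q $ 1 = p$2 * q$3 - p$3 * q$2"
  "cross3 p q $ 2 = p$3 * q$1 - p$1 * q$3"
  "cross3 p q $ 3 = p$1 * q$2 - p$2 * q$1"
  by (simp_all add: cross3_def)

lemma vec3_eq_iff: "(x::complex^3) = y \<longleftrightarrow> x$1 = y$1 \<and> x$2 = y$2 \<and> x$3 = y$3"
  by (simp add: vec_eq_iff forall_3)

lemma bdot_commute: "bdot x y = bdot y x"
  by (simp add: bdot_expand algebra_simps)

lemma bdot_scale_left: "bdot (c *s x) y = c * bdot x y"
  by (simp add: bdot_expand algebra_simps)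

lemma bdot_scale_right: "bdot x (c *s y) = c * bdot x y"
  by (simp add: bdot_expand algebra_simps)

lemma bdot_add_right: "bdot x (y + z) = bdot x y + bdot x z"
  by (simp add: bdot_expand algebra_simps)

lemma bdot_cross3_left: "bdot (cross3 u v) u = 0"
  and bdot_cross3_right: "bdot (cross3 u v) v = 0"
  by (simp_all add: bdot_expand cross3_nth algebra_simps)

lemma cross3_cross3: "cross3 l (cross3 u v) = bdot l v *s u - bdot l u *s v"
  by (simp add: vec3_eq_iff cross3_nth bdot_expand algebra_simps)

lemma proj_eq_refl: "proj_eq x x"
  unfolding proj_eq_def by (rule exI[of _ 1]) simp

lemma proj_eq_sym: "proj_eq x y \<Longrightarrow> proj_eq y x"
  unfolding proj_eq_def
  by (metis divisors_zero nonzero_eq_divide_eq vector_smult_assoc vector_smult_lid)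

lemma proj_eq_trans: "proj_eq x y \<Longrightarrow> proj_eq y z \<Longrightarrow> proj_eq x z"
  unfolding proj_eq_def by (metis mult_eq_0_iff vector_smult_assoc)

lemma scale_eq_imp_proj_eq:
  assumes "d \<noteq> 0" "q \<noteq> 0" "d *s q = c *s p"
  shows "proj_eq p q"
proof -
  have "q = (c / d) *s p"
    using assms(1,3) by (metis nonzero_mult_div_cancel_left vector_smult_assoc divide_inverse_commute
        mult.commute right_inverse vector_smult_lid)
  moreover from this have "c / d \<noteq> 0" using assms(2) by auto
  ultimately show ?thesis unfolding proj_eq_def by blast
qed

lemma cross3_eq_0_imp_proj_eq:
  assumes "u \<noteq> 0" "v \<noteq> 0" "cross3 u v = 0"
  shows "proj_eq u v"
proof -
  have minors: "u$2 * v$3 = u$3 * v$2" "u$3 * v$1 = u$1 * v$3" "u$1 * v$2 = u$2 * v$1"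
    using assms(3) by (simp_all add: vec3_eq_iff cross3_nth)
  obtain k :: 3 where k: "k \<in> {1, 2, 3}" "u$k \<noteq> 0"
    using assms(1) by (auto simp: vec3_eq_iff)
  have "u$k *s v = v$k *s u"
    using k minors by (auto simp: vec3_eq_iff field_simps)
  then show ?thesis using scale_eq_imp_proj_eq assms(2) k(2) by blast
qed

lemma cross3_nonzero: "u \<noteq> 0 \<Longrightarrow> v \<noteq> 0 \<Longrightarrow> \<not> proj_eq u v \<Longrightarrow> cross3 u v \<noteq> 0"
  using cross3_eq_0_imp_proj_eq by metis

lemma proj_eq_bdot_left: "proj_eq l l' \<Longrightarrow> bdot l x = 0 \<longleftrightarrow> bdot l' x = 0"
  unfolding proj_eq_def by (auto simp: bdot_scale_left)

lemma proj_eq_bdot_right: "proj_eq p p' \<Longrightarrow> bdot l p = 0 \<longleftrightarrow> bdot l p' = 0"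
  unfolding proj_eq_def by (auto simp: bdot_scale_right)

lemma line_through_two_points:
  assumes "l \<noteq> 0" "bdot l u = 0" "bdot l v = 0" "u \<noteq> 0" "v \<noteq> 0" "\<not> proj_eq u v"
  shows "proj_eq l (cross3 u v)"
proof -
  have "cross3 l (cross3 u v) = 0" using assms(2,3) by (simp add: cross3_cross3)
  moreover have "cross3 u v \<noteq> 0" using cross3_nonzero assms(4-6) by blast
  ultimately show ?thesis using assms(1) cross3_eq_0_imp_proj_eq by blast
qed

section \<open>Plane conics\<close>

definition polar :: "complex^3^3 \<Rightarrow> complex^3 \<Rightarrow> complex^3 \<Rightarrow> complex" where
  "polar A x y = bdot x (A *v y)"

lemma matrix_vector_mult_nth3:
  "((A::complex^3^3) *v x) $ i = A$i$1 * x$1 + A$i$2 * x$2 + A$i$3 * x$3"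
  by (simp add: matrix_vector_mult_def sum_3)

lemma symmetric_matrix_nth3:
  assumes "transpose A = A"
  shows "A$1$2 = A$2$1" "A$1$3 = A$3$1" "A$2$3 = A$3$2"
  using assms by (metis transpose_def vec_lambda_beta)+

lemma qf_scale: "qf A (c *s x) = c^2 * qf A x"
proof -
  have "A *v (c *s x) = c *s (A *v x)"
    by (simp add: vec_eq_iff matrix_vector_mult_def sum_distrib_left algebra_simps)
  then show ?thesis by (simp add: qf_def bdot_scale_left bdot_scale_right power2_eq_square)
qed

lemma qf_lincomb3:
  assumes "transpose A = A"
  shows "qf A (a *s u + b *s v + c *s w) = a^2 * qf A u + b^2 * qf A v + c^2 * qf A w
     + 2*a*b * polar A u v + 2*a*c * polar A u w + 2*b*c * polar A v w"
  using symmetric_matrix_nth3[OF assms]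
  by (simp add: qf_def polar_def bdot_expand matrix_vector_mult_nth3 power2_eq_square algebra_simps)

text \<open>Cramer's rule for the basis \<open>p1, p2, y\<close>, where \<open>cross3 p1 p2\<close> is the line through \<open>p1, p2\<close>.\<close>
lemma cramer3:
  "bdot (cross3 p1 p2) y *s x = bdot (cross3 p2 y) x *s p1 + bdot (cross3 y p1) x *s p2
     + bdot (cross3 p1 p2) x *s y"
  by (simp add: vec3_eq_iff bdot_expand cross3_nth algebra_simps)

lemma exists_bdot_nonzero:
  assumes "(c::complex^3) \<noteq> 0"
  obtains y where "bdot c y \<noteq> 0"
proof -
  have "bdot c (vector [1,0,0]) = c$1" "bdot c (vector [0,1,0]) = c$2" "bdot c (vector [0,0,1]) = c$3"
    by (simp_all add: bdot_expand)
  moreover have "c$1 \<noteq> 0 \<or> c$2 \<noteq> 0 \<or> c$3 \<noteq> 0"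
    using assms by (simp add: vec3_eq_iff)
  ultimately show ?thesis using that by metis
qed

lemma symmetric_qf_eq_0_imp_eq_0:
  assumes "transpose A = A" "\<And>x. qf A x = 0"
  shows "A = 0"
proof -
  have diagonal: "A$1$1 = 0" "A$2$2 = 0" "A$3$3 = 0"
    using assms(2)[of "vector [1,0,0]"] assms(2)[of "vector [0,1,0]"] assms(2)[of "vector [0,0,1]"]
    by (simp_all add: qf_def bdot_expand matrix_vector_mult_nth3)
  moreover have "A$1$2 = 0" "A$1$3 = 0" "A$2$3 = 0"
    using assms(2)[of "vector [1,1,0]"] assms(2)[of "vector [1,0,1]"] assms(2)[of "vector [0,1,1]"]
      diagonal symmetric_matrix_nth3[OF assms(1)]
    by (simp_all add: qf_def bdot_expand matrix_vector_mult_nth3)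
  ultimately show ?thesis
    using symmetric_matrix_nth3[OF assms(1)] by (simp add: vec_eq_iff forall_3)
qed

text \<open>
  Expanding \<open>qf A (D *s x)\<close> in the basis \<open>p1, p2, y\<close> of \<open>cramer3\<close>, every term that survives
  has a factor \<open>bdot (cross3 p1 p2) x\<close>.\<close>
lemma conic_contains_chord:
  assumes sym: "transpose A = A" and on_conic: "qf A p1 = 0" "qf A p2 = 0"
    and conjugate: "polar A p1 p2 = 0" and chord: "cross3 p1 p2 \<noteq> 0"
  shows "\<exists>b. \<forall>x. qf A x = bdot (cross3 p1 p2) x * bdot b x"
proof -
  define c where "c = cross3 p1 p2"
  obtain y where "bdot c y \<noteq> 0" using exists_bdot_nonzero chord c_def by blast
  define D where "D = bdot c y"
  have "D \<noteq> 0" using \<open>bdot c y \<noteq> 0\<close> D_def by simp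
  have decomp: "D *s x = bdot (cross3 p2 y) x *s p1 + bdot (cross3 y p1) x *s p2 + bdot c x *s y" for x
    unfolding D_def c_def by (rule cramer3)
  define b where "b = (1 / D^2) *s (qf A y *s c + (2 * polar A p1 y) *s cross3 p2 y
       + (2 * polar A p2 y) *s cross3 y p1)"
  have "qf A x = bdot c x * bdot b x" for x
  proof -
    have "D^2 * qf A x = qf A (D *s x)" by (simp add: qf_scale)
    also have "\<dots> = bdot c x * (bdot c x * qf A y + 2 * bdot (cross3 p2 y) x * polar A p1 y
        + 2 * bdot (cross3 y p1) x * polar A p2 y)"
      unfolding decomp qf_lincomb3[OF sym] using on_conic conjugate
      by (simp add: power2_eq_square algebra_simps)
    finally show ?thesis unfolding b_def using \<open>D \<noteq> 0\<close>
      by (simp add: bdot_scale_left bdot_add_right bdot_commute[of _ x] bdot_expand field_simps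
          power2_eq_square)
  qed
  then show ?thesis unfolding c_def by blast
qed

lemma collinear_points_on_conic_not_integral:
  assumes sym: "transpose A = A"
    and on_conic: "qf A p1 = 0" "qf A p2 = 0" "qf A p3 = 0"
    and nonzero: "p1 \<noteq> 0" "p2 \<noteq> 0" "p3 \<noteq> 0"
    and distinct: "\<not> proj_eq p1 p2" "\<not> proj_eq p1 p3" "\<not> proj_eq p2 p3"
    and on_line: "l \<noteq> 0" "bdot l p1 = 0" "bdot l p2 = 0" "bdot l p3 = 0"
  shows "\<not> integral_conic A"
proof -
  define c where "c = cross3 p1 p2"
  have "proj_eq l c"
    unfolding c_def using line_through_two_points on_line(1-3) nonzero(1,2) distinct(1) by blast
  then have "bdot c p3 = 0" using proj_eq_bdot_left on_line(4) by blast
  have "c \<noteq> 0" unfolding c_def using cross3_nonzero nonzero(1,2) distinct(1) by blast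
  then obtain y where "bdot c y \<noteq> 0" by (rule exists_bdot_nonzero)
  define D \<alpha> \<beta> where "D = bdot c y" and "\<alpha> = bdot (cross3 p2 y) p3" and "\<beta> = bdot (cross3 y p1) p3"
  have "D *s p3 = \<alpha> *s p1 + \<beta> *s p2 + bdot c p3 *s y"
    unfolding D_def \<alpha>_def \<beta>_def c_def by (rule cramer3)
  then have decomp: "D *s p3 = \<alpha> *s p1 + \<beta> *s p2"
    using \<open>bdot c p3 = 0\<close> by simp
  have "D \<noteq> 0" using \<open>bdot c y \<noteq> 0\<close> D_def by simp
  have "\<alpha> \<noteq> 0"
  proof
    assume "\<alpha> = 0"
    then have "D *s p3 = \<beta> *s p2" using decomp by simp
    then show False using scale_eq_imp_proj_eq[OF \<open>D \<noteq> 0\<close> nonzero(3)] distinct(3) by blast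
  qed
  have "\<beta> \<noteq> 0"
  proof
    assume "\<beta> = 0"
    then have "D *s p3 = \<alpha> *s p1" using decomp by simp
    then show False using scale_eq_imp_proj_eq[OF \<open>D \<noteq> 0\<close> nonzero(3)] distinct(2) by blast
  qed
  have "0 = qf A (D *s p3)" using on_conic(3) by (simp add: qf_scale)
  also have "\<dots> = 2 * \<alpha> * \<beta> * polar A p1 p2"
    using decomp qf_lincomb3[OF sym, of \<alpha> p1 \<beta> p2 0 y] on_conic by simp
  finally have "polar A p1 p2 = 0" using \<open>\<alpha> \<noteq> 0\<close> \<open>\<beta> \<noteq> 0\<close> by simp
  then show ?thesis
    using conic_contains_chord[OF sym on_conic(1,2)] \<open>c \<noteq> 0\<close> c_def
    unfolding integral_conic_def by blast
qed

lemma line_factor_nonzero: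
  assumes "transpose A = A" "A \<noteq> 0" "\<And>x. qf A x = bdot a x * bdot b x"
  shows "a \<noteq> 0"
  using assms symmetric_qf_eq_0_imp_eq_0[of A] by (auto simp: bdot_expand)

section \<open>Counting two-element subsets\<close>

definition doubletons :: "'a set \<Rightarrow> 'a set set" where
  "doubletons S = {e. e \<subseteq> S \<and> card e = 2}"

lemma doubleton_in_doubletons: "i \<in> S \<Longrightarrow> k \<in> S \<Longrightarrow> i \<noteq> k \<Longrightarrow> {i, k} \<in> doubletons S"
  unfolding doubletons_def by simp

lemma doubletons_memE:
  assumes "e \<in> doubletons S" "i \<in> e"
  obtains k where "e = {i, k}" "i \<noteq> k" "i \<in> S" "k \<in> S"
proof -
  obtain x y where "e = {x, y}" "x \<noteq> y" "e \<subseteq> S"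
    using assms(1) unfolding doubletons_def by (auto simp: card_2_iff)
  then show ?thesis using assms(2) that by (auto simp: doubleton_eq_iff)
qed

lemma finite_doubletons: "finite S \<Longrightarrow> finite (doubletons S)"
  unfolding doubletons_def by simp

lemma card_doubletons: "finite S \<Longrightarrow> card (doubletons S) = card S choose 2"
  unfolding doubletons_def by (rule n_subsets)

lemma card_doubletons_containing:
  assumes "finite S" "i \<in> S"
  shows "card {e \<in> doubletons S. i \<in> e} = card S - 1"
proof -
  have "{e \<in> doubletons S. i \<in> e} = (\<lambda>k. {i, k}) ` (S - {i})"
    using assms(2) by (auto elim: doubletons_memE intro: doubleton_in_doubletons)
  moreover have "inj_on (\<lambda>k. {i, k}) (S - {i})"
    by (auto simp: inj_on_def doubleton_eq_iff)
  ultimately show ?thesis using assms by (simp add: card_image)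
qed

lemma card_doubletons_degree_bound:
  assumes "finite S" "F \<subseteq> doubletons S" "\<And>i. i \<in> S \<Longrightarrow> card {e \<in> F. i \<in> e} \<le> d"
  shows "2 * card F \<le> card S * d"
proof -
  have "finite F" using assms(1,2) finite_doubletons finite_subset by blast
  have "2 * card F = (\<Sum>e\<in>F. card {i \<in> S. i \<in> e})"
  proof -
    have "{i \<in> S. i \<in> e} = e" "card e = 2" if "e \<in> F" for e
      using that assms(2) unfolding doubletons_def by auto
    then show ?thesis by simp
  qed
  also have "\<dots> = (\<Sum>i\<in>S. card {e \<in> F. i \<in> e})"
    using sum.swap_restrict[OF \<open>finite F\<close> assms(1), of "\<lambda>_ _. 1::nat" "\<lambda>e i. i \<in> e"] by simp
  also have "\<dots> \<le> card S * d"
    using sum_mono[of S _ "\<lambda>_. d"] assms(3) by simp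
  finally show ?thesis .
qed

lemma four_mult_le_square_add: "4 * ((r::nat) * s) \<le> (r + s)^2"
proof -
  have "0 \<le> (int r - int s)^2" by simp
  then have "int (4 * (r * s)) \<le> int ((r + s)^2)" by (simp add: power2_eq_square algebra_simps)
  then show ?thesis by linarith
qed

lemma choose_2_double_add: "2 * (n choose 2) + n = n * n"
proof (induction n)
  case (Suc n)
  have "Suc n choose 2 = n + (n choose 2)"
    using choose_reduce_nat[of "Suc n" 2] by (simp add: numeral_2_eq_2)
  then show ?case using Suc by simp
qed simp

lemma heavy_marking_arith:
  "2 * ((2*g+2) choose 2) < 3 * (((2*g+2) choose 2) - ((g+1) choose 2))"
proof -
  have "(2*g+2) * (2*g+2) = 4 * ((g+1) * (g+1))" by (simp add: algebra_simps)
  then have "3 * ((g+1) choose 2) < (2*g+2) choose 2"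
    using choose_2_double_add[of "2*g+2"] choose_2_double_add[of "g+1"] by linarith
  then show ?thesis by (simp add: diff_mult_distrib2)
qed

lemma isolated_marking_arith:
  assumes "5 \<le> m" "8 * ((m choose 2) - \<mu>) \<le> m^2"
  shows "2 * (m choose 2) < 3 * \<mu>"
proof -
  have "5 * m \<le> m * m" using assms(1) by simp
  moreover have "8 * (m choose 2) \<le> m * m + 8 * \<mu>"
    using assms(2) by (simp add: power2_eq_square diff_mult_distrib2)
  ultimately show ?thesis using choose_2_double_add[of m] assms(1) by linarith
qed

lemma generic_mu_pt_arith:
  assumes "6 \<le> m" "2 * \<mu> \<le> 3 * m"
  shows "3 * \<mu> \<le> 2 * (m choose 2)"
proof -
  have "6 * m \<le> m * m" using assms(1) by simp
  then show ?thesis using assms(2) choose_2_double_add[of m] by linarith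
qed

lemma double_marking_arith:
  assumes "7 \<le> m"
  shows "3 * m < 2 * ((m choose 2) - ((m - 2) choose 2))"
proof -
  define n where "n = m - 2"
  have n: "m = n + 2" using assms by (simp add: n_def)
  have "m * m = n * n + 4 * n + 4" unfolding n by (simp add: algebra_simps)
  then have "m choose 2 = (n choose 2) + 2 * n + 1"
    using choose_2_double_add[of m] choose_2_double_add[of n] n by linarith
  moreover have "m - 2 = n" by (simp add: n_def)
  ultimately show ?thesis using assms n by simp
qed

lemma weight_nth_ge_2:
  assumes "i < length ps" "k < length ps" "i \<noteq> k" "proj_eq (ps!i) (ps!k)"
  shows "2 \<le> weight ps (ps!i)"
proof -
  have "{i, k} \<subseteq> {j. j < length ps \<and> proj_eq (ps!i) (ps!j)}"
    using assms proj_eq_refl by auto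
  then have "card {i, k} \<le> weight ps (ps!i)"
    unfolding weight_def by (intro card_mono) auto
  then show ?thesis using assms(3) by simp
qed

lemma card_pairs_in_clusters:
  assumes "R \<subseteq> {..<length ps}" "\<And>i. i \<in> R \<Longrightarrow> weight ps (ps!i) \<le> w"
  shows "2 * card {e \<in> doubletons R. \<exists>i k. e = {i, k} \<and> proj_eq (ps!i) (ps!k)} \<le> card R * (w - 1)"
proof -
  define F where "F = {e \<in> doubletons R. \<exists>i k. e = {i, k} \<and> proj_eq (ps!i) (ps!k)}"
  have "card {e \<in> F. i \<in> e} \<le> w - 1" if "i \<in> R" for i
  proof -
    define K where "K = {k. k < length ps \<and> proj_eq (ps!i) (ps!k)}"
    have "i \<in> K" using that assms(1) proj_eq_refl unfolding K_def by auto
    have "e \<in> doubletons K" if e_in: "e \<in> F" and "i \<in> e" for e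
    proof -
      obtain i' k' where e: "e \<in> doubletons R" "e = {i', k'}" "proj_eq (ps!i') (ps!k')"
        using e_in unfolding F_def by blast
      then have "proj_eq (ps!i) (ps!i') \<and> proj_eq (ps!i) (ps!k')"
        using \<open>i \<in> e\<close> proj_eq_refl proj_eq_sym by auto
      moreover have "i' < length ps" "k' < length ps"
        using e(1,2) assms(1) unfolding doubletons_def by auto
      ultimately have "e \<subseteq> K" using e(2) unfolding K_def by auto
      then show "e \<in> doubletons K" using e(1) unfolding doubletons_def by auto
    qed
    then have "{e \<in> F. i \<in> e} \<subseteq> {e \<in> doubletons K. i \<in> e}" by blast
    then have "card {e \<in> F. i \<in> e} \<le> card {e \<in> doubletons K. i \<in> e}"
      by (intro card_mono) (auto simp: K_def finite_doubletons)
    also have "\<dots> = card K - 1"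
      by (rule card_doubletons_containing[OF _ \<open>i \<in> K\<close>]) (simp add: K_def)
    also have "\<dots> \<le> w - 1"
      using assms(2) that unfolding K_def weight_def by (simp add: diff_le_mono)
    finally show ?thesis .
  qed
  moreover have "finite R" "F \<subseteq> doubletons R"
    using assms(1) finite_subset unfolding F_def by auto
  ultimately show ?thesis using card_doubletons_degree_bound unfolding F_def by blast
qed

section \<open>Limits of generic configurations\<close>

definition index_pairs :: "nat \<Rightarrow> (nat \<times> nat) list" where
  "index_pairs m = [(i, j). i \<leftarrow> [0..<m], j \<leftarrow> [Suc i..<m]]"

lemma set_index_pairs: "set (index_pairs m) = {(i, j). i < j \<and> j < m}"
  unfolding index_pairs_def by force

lemma distinct_index_pairs: "distinct (index_pairs m)"
proof -
  have "distinct (concat (map (\<lambda>i. map (Pair i) (ys i)) xs))"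
    if "distinct xs" "\<And>i. distinct (ys i)" for xs :: "nat list" and ys :: "nat \<Rightarrow> nat list"
    using that by (induction xs) (auto simp: distinct_map inj_on_def)
  then show ?thesis unfolding index_pairs_def by (simp add: comp_def)
qed

lemma bij_betw_index_pairs_doubletons:
  "bij_betw (\<lambda>(i, k). {i, k}) (set (index_pairs m)) (doubletons {..<m})"
proof (rule bij_betw_imageI)
  show "inj_on (\<lambda>(i, k). {i, k}) (set (index_pairs m))"
    unfolding set_index_pairs inj_on_def by (auto simp: doubleton_eq_iff)
  show "(\<lambda>(i, k). {i, k}) ` set (index_pairs m) = doubletons {..<m}"
  proof (intro equalityI subsetI)
    fix e assume "e \<in> doubletons {..<m}"
    then obtain i k where "e = {i, k}" "i \<noteq> k" "i < m" "k < m"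
      unfolding doubletons_def by (auto simp: card_2_iff)
    then show "e \<in> (\<lambda>(i, k). {i, k}) ` set (index_pairs m)"
      unfolding set_index_pairs
      by (cases "i < k") (auto simp: insert_commute intro!: image_eqI[of _ _ "(min i k, max i k)"])
  qed (auto simp: set_index_pairs doubletons_def)
qed

lemma length_index_pairs: "length (index_pairs m) = m choose 2"
proof -
  have "length (index_pairs m) = card (set (index_pairs m))"
    using distinct_index_pairs distinct_card by metis
  also have "\<dots> = card (doubletons {..<m})"
    using bij_betw_index_pairs_doubletons bij_betw_same_card by blast
  finally show ?thesis by (simp add: card_doubletons)
qed

lemma psi_rep_permutation:
  assumes "psi_rep P Ls" "length P = m"
  obtains p where "p permutes {..<m choose 2}"
    "\<And>j. j < m choose 2 \<Longrightarrow>
       proj_eq (Ls ! j) (cross3 (P ! fst (index_pairs m ! p j)) (P ! snd (index_pairs m ! p j)))"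
proof -
  define f where "f q = pcls (cross3 (P ! fst q) (P ! snd q))" for q
  have "mset (map pcls Ls) = mset (map f (index_pairs m))"
    using assms unfolding psi_rep_def index_pairs_def f_def by (simp add: map_concat comp_def)
  then obtain p where p: "p permutes {..<length (map f (index_pairs m))}"
    "permute_list p (map f (index_pairs m)) = map pcls Ls"
    by (rule mset_eq_permutation)
  have "length Ls = m choose 2"
    using p(2) by (metis length_index_pairs length_map length_permute_list)
  have "proj_eq (Ls ! j) (cross3 (P ! fst (index_pairs m ! p j)) (P ! snd (index_pairs m ! p j)))"
    if "j < m choose 2" for j
  proof -
    have "pcls (Ls ! j) = permute_list p (map f (index_pairs m)) ! j"
      using p(2) that \<open>length Ls = m choose 2\<close> by simp
    also have "\<dots> = f (index_pairs m ! p j)"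
      using p(1) that permutes_in_image[OF p(1)] by (simp add: permute_list_nth length_index_pairs)
    finally show ?thesis unfolding f_def pcls_def using proj_eq_refl by blast
  qed
  then show ?thesis using that p(1) by (simp add: length_index_pairs)
qed

lemma bdot_limit_eq_0:
  assumes "X \<longlonglongrightarrow> x" "Y \<longlonglongrightarrow> y" "\<And>n. bdot (X n) (Y n) = 0"
  shows "bdot x y = 0"
proof -
  have "(\<lambda>n. bdot (X n) (Y n)) \<longlonglongrightarrow> bdot x y"
    unfolding bdot_expand by (intro tendsto_intros assms)
  then show ?thesis using assms(3) by (simp add: LIMSEQ_const_iff)
qed

lemma finite_range_constant_subseq:
  fixes f :: "nat \<Rightarrow> 'a"
  assumes "finite (range f)"
  obtains r :: "nat \<Rightarrow> nat" and c where "strict_mono r" "\<And>n. f (r n) = c"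
proof -
  obtain c where "infinite (f -` {c})" using inf_img_fin_domE[OF assms] by blast
  then obtain r :: "nat \<Rightarrow> nat" where "strict_mono r" "\<And>n. r n \<in> f -` {c}" using infinite_enumerate by blast
  then show ?thesis using that by simp
qed

text \<open>
  What survives in the limit of the correspondence between the lines of \<open>\<psi>(k\<^sub>n)\<close> and the
  pairs of markings of \<open>k\<^sub>n\<close>.\<close>
locale chord_labelling =
  fixes m :: nat and ps L :: "(complex^3) list" and \<tau> :: "nat \<Rightarrow> nat set"
  assumes length_ps: "length ps = m"
    and length_L: "length L = m choose 2"
    and marking_nonzero: "i < m \<Longrightarrow> ps ! i \<noteq> 0"
    and line_nonzero: "j < m choose 2 \<Longrightarrow> L ! j \<noteq> 0"
    and bij_label: "bij_betw \<tau> {..<m choose 2} (doubletons {..<m})"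
    and label_incident: "j < m choose 2 \<Longrightarrow> i \<in> \<tau> j \<Longrightarrow> bdot (L ! j) (ps ! i) = 0"

text \<open>
  The matching between lines and pairs of markings of the generic approximations takes finitely
  many values, so it is constant along a subsequence.\<close>
lemma Gamma_psi_constant_matching:
  assumes "Gamma_psi m A ps L"
  obtains p Ps Ls where "p permutes {..<m choose 2}"
    "\<And>i. i < m \<Longrightarrow> (\<lambda>n. Ps n ! i) \<longlonglongrightarrow> ps ! i"
    "\<And>j. j < m choose 2 \<Longrightarrow> (\<lambda>n. Ls n ! j) \<longlonglongrightarrow> L ! j"
    "\<And>n j. j < m choose 2 \<Longrightarrow> proj_eq (Ls n ! j)
       (cross3 (Ps n ! fst (index_pairs m ! p j)) (Ps n ! snd (index_pairs m ! p j)))"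
proof -
  obtain Qs Ps Ls where approx: "\<And>n. valid_k m (Qs n) (Ps n) \<and> psi_rep (Ps n) (Ls n)"
    and lim_ps: "\<And>i. i < m \<Longrightarrow> (\<lambda>n. Ps n ! i) \<longlonglongrightarrow> ps ! i"
    and lim_L: "\<And>j. j < m choose 2 \<Longrightarrow> (\<lambda>n. Ls n ! j) \<longlonglongrightarrow> L ! j"
    using assms unfolding Gamma_psi_def by blast
  define chord where "chord n q = cross3 (Ps n ! fst q) (Ps n ! snd q)" for n q
  have "\<exists>p. p permutes {..<m choose 2} \<and>
      (\<forall>j < m choose 2. proj_eq (Ls n ! j) (chord n (index_pairs m ! p j)))" for n
  proof -
    have "psi_rep (Ps n) (Ls n)" "length (Ps n) = m" using approx[of n] unfolding valid_k_def by auto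
    from psi_rep_permutation[OF this] show ?thesis unfolding chord_def by blast
  qed
  then obtain \<pi> where \<pi>: "\<And>n. \<pi> n permutes {..<m choose 2}"
    "\<And>n j. j < m choose 2 \<Longrightarrow> proj_eq (Ls n ! j) (chord n (index_pairs m ! \<pi> n j))"
    using someI_ex by metis
  have "range \<pi> \<subseteq> {p. p permutes {..<m choose 2}}" using \<pi>(1) by auto
  then have "finite (range \<pi>)" using finite_permutations finite_subset by blast
  then obtain r :: "nat \<Rightarrow> nat" and p where r: "strict_mono r" "\<And>n. \<pi> (r n) = p"
    using finite_range_constant_subseq by blast
  show ?thesis
  proof (rule that[of p "Ps \<circ> r" "Ls \<circ> r"])
    show "p permutes {..<m choose 2}" using \<pi>(1)[of "r 0"] r(2) by simp
    show "((\<lambda>n. (Ps \<circ> r) n ! i) \<longlonglongrightarrow> ps ! i)" if "i < m" for i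
      using LIMSEQ_subseq_LIMSEQ[OF lim_ps[OF that] r(1)] by (simp add: comp_def)
    show "((\<lambda>n. (Ls \<circ> r) n ! j) \<longlonglongrightarrow> L ! j)" if "j < m choose 2" for j
      using LIMSEQ_subseq_LIMSEQ[OF lim_L[OF that] r(1)] by (simp add: comp_def)
    show "proj_eq ((Ls \<circ> r) n ! j)
        (cross3 ((Ps \<circ> r) n ! fst (index_pairs m ! p j)) ((Ps \<circ> r) n ! snd (index_pairs m ! p j)))"
      if "j < m choose 2" for n j
      using \<pi>(2)[OF that, of "r n"] r(2)[of n] unfolding chord_def by simp
  qed
qed

lemma Gamma_psi_chord_labelling:
  assumes "Gamma_psi m A ps L"
  obtains \<tau> where "chord_labelling m ps L \<tau>"
proof -
  obtain p Ps Ls where p: "p permutes {..<m choose 2}"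
    and lim_ps: "\<And>i. i < m \<Longrightarrow> (\<lambda>n. Ps n ! i) \<longlonglongrightarrow> ps ! i"
    and lim_L: "\<And>j. j < m choose 2 \<Longrightarrow> (\<lambda>n. Ls n ! j) \<longlonglongrightarrow> L ! j"
    and matching: "\<And>n j. j < m choose 2 \<Longrightarrow> proj_eq (Ls n ! j)
       (cross3 (Ps n ! fst (index_pairs m ! p j)) (Ps n ! snd (index_pairs m ! p j)))"
    using Gamma_psi_constant_matching[OF assms] by blast
  have valid: "valid_k m A ps" "valid_r (m choose 2) L"
    using assms unfolding Gamma_psi_def by blast+
  define \<tau> where "\<tau> j = (\<lambda>(i, k). {i, k}) (index_pairs m ! p j)" for j
  show ?thesis
  proof (rule that, unfold_locales)
    show "length ps = m" "length L = m choose 2"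
      using valid unfolding valid_k_def valid_r_def by auto
    show "ps ! i \<noteq> 0" if "i < m" for i
      using valid that unfolding valid_k_def by auto
    show "L ! j \<noteq> 0" if "j < m choose 2" for j
      using valid that unfolding valid_r_def by auto
    have "bij_betw ((!) (index_pairs m)) {..<m choose 2} (set (index_pairs m))"
      by (rule bij_betw_nth) (simp_all add: distinct_index_pairs length_index_pairs)
    then have "bij_betw (((\<lambda>(i, k). {i, k}) \<circ> (!) (index_pairs m)) \<circ> p) {..<m choose 2}
        (doubletons {..<m})"
      by (rule bij_betw_trans[OF permutes_imp_bij[OF p]
            bij_betw_trans[OF _ bij_betw_index_pairs_doubletons]])
    moreover have "((\<lambda>(i, k). {i, k}) \<circ> (!) (index_pairs m)) \<circ> p = \<tau>"
      by (simp add: fun_eq_iff \<tau>_def)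
    ultimately show "bij_betw \<tau> {..<m choose 2} (doubletons {..<m})" by simp
    fix j i assume j: "j < m choose 2" and i: "i \<in> \<tau> j"
    have "index_pairs m ! p j \<in> set (index_pairs m)"
      using j permutes_in_image[OF p] by (simp add: length_index_pairs)
    then have "i < m" using i unfolding \<tau>_def set_index_pairs by auto
    have "bdot (Ls n ! j) (Ps n ! i) = 0" for n
    proof -
      let ?chord = "cross3 (Ps n ! fst (index_pairs m ! p j)) (Ps n ! snd (index_pairs m ! p j))"
      have "bdot ?chord (Ps n ! i) = 0"
        using i unfolding \<tau>_def by (auto simp: case_prod_beta bdot_cross3_left bdot_cross3_right)
      then show ?thesis using proj_eq_bdot_left matching[OF j, of n] by blast
    qed
    then show "bdot (L ! j) (ps ! i) = 0" using bdot_limit_eq_0 lim_L[OF j] lim_ps[OF \<open>i < m\<close>] by blast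
  qed
qed

lemma Gamma_psi_markings_on_conic:
  assumes "Gamma_psi m A ps L"
  shows "A \<noteq> 0" "transpose A = A" "\<And>i. i < m \<Longrightarrow> qf A (ps!i) = 0"
  using assms unfolding Gamma_psi_def valid_k_def by auto

section \<open>Counting the lines of a chord labelling\<close>

context chord_labelling
begin

lemma label_in_doubletons: "j < m choose 2 \<Longrightarrow> \<tau> j \<in> doubletons {..<m}"
  using bij_label by (auto simp: bij_betw_def)

lemma labelE:
  assumes "j < m choose 2" "i \<in> \<tau> j"
  obtains k where "\<tau> j = {i, k}" "i \<noteq> k" "i < m" "k < m"
proof -
  obtain k where "\<tau> j = {i, k}" "i \<noteq> k" "i \<in> {..<m}" "k \<in> {..<m}"
    using doubletons_memE[OF label_in_doubletons[OF assms(1)] assms(2)] by blast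
  then show ?thesis using that by simp
qed

lemma label_doubletonE:
  assumes "j < m choose 2"
  obtains i k where "\<tau> j = {i, k}" "i \<noteq> k" "i < m" "k < m"
proof -
  obtain i k where "\<tau> j = {i, k}" "i \<noteq> k" "\<tau> j \<subseteq> {..<m}"
    using label_in_doubletons[OF assms] unfolding doubletons_def card_2_iff by blast
  then show ?thesis using that by simp
qed

lemma inj_label: "inj_on \<tau> {..<m choose 2}"
  using bij_label by (simp add: bij_betw_def)

lemma card_image_label: "J \<subseteq> {..<m choose 2} \<Longrightarrow> card (\<tau> ` J) = card J"
  using inj_label by (meson card_image inj_on_subset)

lemma exists_label:
  assumes "i < m" "k < m" "i \<noteq> k"
  shows "\<exists>j < m choose 2. \<tau> j = {i, k}"
proof -
  have "{i, k} \<in> \<tau> ` {..<m choose 2}"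
    using bij_label doubleton_in_doubletons[of i "{..<m}" k] assms by (simp add: bij_betw_def)
  then show ?thesis by (metis imageE lessThan_iff)
qed

lemma label_chord:
  assumes "j < m choose 2" "\<tau> j = {i, k}" "\<not> proj_eq (ps!i) (ps!k)"
  shows "proj_eq (L!j) (cross3 (ps!i) (ps!k))"
proof -
  have "i < m" "k < m" using label_in_doubletons[OF assms(1)] assms(2) by (auto simp: doubletons_def)
  moreover have "bdot (L!j) (ps!i) = 0" "bdot (L!j) (ps!k) = 0"
    using label_incident[OF assms(1)] assms(2) by simp_all
  ultimately show ?thesis
    using line_through_two_points[OF line_nonzero[OF assms(1)]] marking_nonzero assms(3) by blast
qed

lemma card_labels_containing:
  assumes "i < m"
  shows "card {j. j < m choose 2 \<and> i \<in> \<tau> j} = m - 1"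
proof -
  have "card {j. j < m choose 2 \<and> i \<in> \<tau> j} = card (\<tau> ` {j. j < m choose 2 \<and> i \<in> \<tau> j})"
    by (rule card_image_label[symmetric]) auto
  also have "\<tau> ` {j. j < m choose 2 \<and> i \<in> \<tau> j} = {e \<in> doubletons {..<m}. i \<in> e}"
    using bij_label by (auto simp: bij_betw_def)
  also have "card \<dots> = m - 1" using card_doubletons_containing[of "{..<m}" i] assms by simp
  finally show ?thesis .
qed

lemma card_labels_avoiding:
  assumes "C \<subseteq> {..<m}"
  shows "card {j. j < m choose 2 \<and> \<tau> j \<inter> C = {}} \<le> (m - card C) choose 2"
proof -
  have "card {j. j < m choose 2 \<and> \<tau> j \<inter> C = {}} = card (\<tau> ` {j. j < m choose 2 \<and> \<tau> j \<inter> C = {}})"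
    by (rule card_image_label[symmetric]) auto
  also have "\<dots> \<le> card (doubletons ({..<m} - C))"
    by (rule card_mono[OF finite_doubletons]) (use label_in_doubletons in \<open>auto simp: doubletons_def\<close>)
  also have "\<dots> = (m - card C) choose 2"
    using assms by (simp add: card_doubletons card_Diff_subset finite_subset)
  finally show ?thesis .
qed

text \<open>A line whose label meets the cluster of markings at \<open>p\<close> passes through \<open>p\<close>.\<close>
lemma mu_pt_ge_cluster: "(m choose 2) - ((m - weight ps p) choose 2) \<le> mu_pt L p"
proof -
  define C where "C = {i. i < m \<and> proj_eq p (ps!i)}"
  define meeting where "meeting = {j. j < m choose 2 \<and> \<tau> j \<inter> C \<noteq> {}}"
  define avoiding where "avoiding = {j. j < m choose 2 \<and> \<tau> j \<inter> C = {}}"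
  have "weight ps p = card C" unfolding weight_def C_def length_ps ..
  have "meeting \<subseteq> {j. j < length L \<and> bdot (L!j) p = 0}"
  proof
    fix j assume "j \<in> meeting"
    then obtain i where i: "j < m choose 2" "i \<in> \<tau> j" "proj_eq p (ps!i)"
      unfolding meeting_def C_def by blast
    then have "bdot (L!j) (ps!i) = 0" using label_incident by blast
    then have "bdot (L!j) p = 0" using proj_eq_bdot_right[OF i(3)] by simp
    then show "j \<in> {j. j < length L \<and> bdot (L!j) p = 0}" using i(1) length_L by simp
  qed
  then have "card meeting \<le> mu_pt L p" unfolding mu_pt_def by (intro card_mono) auto
  moreover have "card avoiding \<le> (m - weight ps p) choose 2"
    unfolding avoiding_def \<open>weight ps p = card C\<close> by (rule card_labels_avoiding) (auto simp: C_def)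
  moreover have "m choose 2 \<le> card meeting + card avoiding"
  proof -
    have "{..<m choose 2} = meeting \<union> avoiding" unfolding meeting_def avoiding_def by auto
    then show ?thesis by (metis card_Un_le card_lessThan)
  qed
  ultimately show ?thesis by linarith
qed

lemma mu_line_ge_2:
  assumes "l \<noteq> 0" "a < m" "b < m" "c < m" "b \<noteq> c"
    and "\<not> proj_eq (ps!a) (ps!b)" "\<not> proj_eq (ps!a) (ps!c)"
    and "bdot l (ps!a) = 0" "bdot l (ps!b) = 0" "bdot l (ps!c) = 0"
  shows "2 \<le> mu_line L l"
proof -
  have chord_is_l: "\<exists>j < m choose 2. \<tau> j = {a, k} \<and> proj_eq l (L!j)"
    if k: "k < m" "\<not> proj_eq (ps!a) (ps!k)" "bdot l (ps!k) = 0" for k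
  proof -
    have "a \<noteq> k" using k(2) proj_eq_refl by blast
    then obtain j where j: "j < m choose 2" "\<tau> j = {a, k}" using exists_label assms(2) k(1) by blast
    have "proj_eq (L!j) (cross3 (ps!a) (ps!k))" by (rule label_chord[OF j k(2)])
    moreover have "proj_eq l (cross3 (ps!a) (ps!k))"
      by (rule line_through_two_points[OF assms(1,8) k(3) marking_nonzero[OF assms(2)]
            marking_nonzero[OF k(1)] k(2)])
    ultimately show ?thesis using j proj_eq_trans proj_eq_sym by metis
  qed
  obtain j1 where j1: "j1 < m choose 2" "\<tau> j1 = {a, b}" "proj_eq l (L!j1)"
    using chord_is_l[OF assms(3,6,9)] by blast
  obtain j2 where j2: "j2 < m choose 2" "\<tau> j2 = {a, c}" "proj_eq l (L!j2)"
    using chord_is_l[OF assms(4,7,10)] by blast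
  have "j1 \<noteq> j2" using j1(2) j2(2) assms(5) by (auto simp: doubleton_eq_iff)
  with j1 j2 have "card {j1, j2} \<le> mu_line L l"
    unfolding mu_line_def by (intro card_mono) (auto simp: length_L)
  then show ?thesis using \<open>j1 \<noteq> j2\<close> by simp
qed

lemma card_lines_missing_point: "card {j. j < m choose 2 \<and> bdot (L!j) y \<noteq> 0} = (m choose 2) - mu_pt L y"
proof -
  let ?through = "{j. j < m choose 2 \<and> bdot (L!j) y = 0}"
  let ?missing = "{j. j < m choose 2 \<and> bdot (L!j) y \<noteq> 0}"
  have "card (?through \<union> ?missing) = card ?through + card ?missing" by (rule card_Un_disjoint) auto
  moreover have "?through \<union> ?missing = {..<m choose 2}" by auto
  ultimately show ?thesis unfolding mu_pt_def length_L by simp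
qed

text \<open>
  A line missing \<open>y\<close> avoids the cluster \<open>C\<close> of \<open>y\<close>, and it is not \<open>b\<close>, so it is not
  the chord of two distinct markings on \<open>b\<close>.\<close>
lemma labels_of_lines_missing_point:
  assumes "b \<noteq> 0" "bdot b y = 0" "\<And>i. i < m \<Longrightarrow> i \<noteq> j0 \<Longrightarrow> bdot b (ps!i) = 0"
    and C_def: "C = {k. k < m \<and> proj_eq y (ps!k)}" and R_def: "R = {..<m} - insert j0 C"
  shows "\<tau> ` {j. j < m choose 2 \<and> bdot (L!j) y \<noteq> 0}
    \<subseteq> {e \<in> doubletons (insert j0 R). j0 \<in> e}
      \<union> {e \<in> doubletons R. \<exists>i k. e = {i, k} \<and> proj_eq (ps!i) (ps!k)}"
proof (intro subsetI)
  fix e assume "e \<in> \<tau> ` {j. j < m choose 2 \<and> bdot (L!j) y \<noteq> 0}"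
  then obtain j where j: "j < m choose 2" "bdot (L!j) y \<noteq> 0" "e = \<tau> j" by blast
  have avoids_C: "i \<notin> C" if "i \<in> \<tau> j" for i
  proof
    assume "i \<in> C"
    then have "proj_eq y (ps!i)" using C_def by simp
    then show False using label_incident[OF j(1) that] j(2) proj_eq_bdot_right by blast
  qed
  show "e \<in> {e \<in> doubletons (insert j0 R). j0 \<in> e}
      \<union> {e \<in> doubletons R. \<exists>i k. e = {i, k} \<and> proj_eq (ps!i) (ps!k)}"
  proof (cases "j0 \<in> \<tau> j")
    case True
    then obtain k where "\<tau> j = {j0, k}" "j0 \<noteq> k" "k < m" by (rule labelE[OF j(1)])
    then show ?thesis using avoids_C j(3) R_def by (auto intro!: doubleton_in_doubletons)
  next
    case False
    obtain i k where ik: "\<tau> j = {i, k}" "i \<noteq> k" "i < m" "k < m"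
      by (rule label_doubletonE[OF j(1)])
    then have "i \<in> R" "k \<in> R" using False avoids_C R_def by auto
    moreover have "proj_eq (ps!i) (ps!k)"
    proof (rule ccontr)
      assume "\<not> proj_eq (ps!i) (ps!k)"
      have "i \<noteq> j0" "k \<noteq> j0" using False ik(1) by auto
      have "proj_eq b (cross3 (ps!i) (ps!k))"
        by (rule line_through_two_points[OF assms(1) assms(3)[OF ik(3) \<open>i \<noteq> j0\<close>]
              assms(3)[OF ik(4) \<open>k \<noteq> j0\<close>] marking_nonzero[OF ik(3)] marking_nonzero[OF ik(4)]
              \<open>\<not> proj_eq (ps!i) (ps!k)\<close>])
      then have "bdot (cross3 (ps!i) (ps!k)) y = 0" using proj_eq_bdot_left assms(2) by blast
      moreover have "proj_eq (L!j) (cross3 (ps!i) (ps!k))"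
        by (rule label_chord[OF j(1) ik(1) \<open>\<not> proj_eq (ps!i) (ps!k)\<close>])
      ultimately show False using j(2) proj_eq_bdot_left by blast
    qed
    ultimately show ?thesis using ik j(3) by (auto intro!: doubleton_in_doubletons)
  qed
qed

text \<open>
  With \<open>w\<close> the weight of \<open>y = ps!i0\<close> and \<open>R\<close> the markings outside \<open>j0\<close> and the cluster of \<open>y\<close>,
  we have \<open>|R| + w + 1 = m\<close>, at most \<open>|R|(w + 1)/2\<close> lines miss \<open>y\<close>, and
  \<open>4|R|(w + 1) \<le> m\<^sup>2\<close>.\<close>
lemma few_lines_miss_heaviest_marking:
  assumes "b \<noteq> 0" "j0 < m" "i0 < m" "i0 \<noteq> j0" "\<not> proj_eq (ps!i0) (ps!j0)"
    and on_b: "\<And>i. i < m \<Longrightarrow> i \<noteq> j0 \<Longrightarrow> bdot b (ps!i) = 0"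
    and heaviest: "\<And>i. i < m \<Longrightarrow> i \<noteq> j0 \<Longrightarrow> weight ps (ps!i) \<le> weight ps (ps!i0)"
  shows "8 * ((m choose 2) - mu_pt L (ps!i0)) \<le> m^2"
proof -
  define y w C R where "y = ps!i0" and "w = weight ps y"
    and "C = {k. k < m \<and> proj_eq y (ps!k)}" and "R = {..<m} - insert j0 C"
  have "j0 \<notin> C" using assms(5) unfolding C_def y_def by simp
  have "finite C" "card C = w" unfolding C_def w_def weight_def length_ps by simp_all
  have "i0 \<in> C" using assms(3) proj_eq_refl unfolding C_def y_def by simp
  then have "1 \<le> w" using card_mono[OF \<open>finite C\<close>, of "{i0}"] \<open>card C = w\<close> by simp
  have "card R + w + 1 = m"
  proof -
    have sub: "insert j0 C \<subseteq> {..<m}" using assms(2) C_def by auto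
    have "card (insert j0 C) = w + 1" using \<open>j0 \<notin> C\<close> \<open>finite C\<close> \<open>card C = w\<close> by simp
    moreover have "card (insert j0 C) \<le> m" using card_mono[OF _ sub] by simp
    moreover have "card R = m - card (insert j0 C)"
      unfolding R_def using card_Diff_subset[OF finite_subset[OF sub] sub] by simp
    ultimately show ?thesis by linarith
  qed
  let ?S1 = "{e \<in> doubletons (insert j0 R). j0 \<in> e}"
  let ?S2 = "{e \<in> doubletons R. \<exists>i k. e = {i, k} \<and> proj_eq (ps!i) (ps!k)}"
  define U where "U = {j. j < m choose 2 \<and> bdot (L!j) y \<noteq> 0}"
  have "card U \<le> card ?S1 + card ?S2"
  proof -
    have "\<tau> ` U \<subseteq> ?S1 \<union> ?S2"
      unfolding U_def
      by (rule labels_of_lines_missing_point[OF assms(1) _ on_b C_def R_def])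
        (use on_b assms(3,4) y_def in auto)
    then have "card (\<tau> ` U) \<le> card (?S1 \<union> ?S2)"
      by (intro card_mono) (auto simp: R_def finite_doubletons)
    moreover have "card (\<tau> ` U) = card U" by (rule card_image_label) (auto simp: U_def)
    ultimately show ?thesis using card_Un_le[of ?S1 ?S2] by linarith
  qed
  moreover have "card ?S1 = card R"
    using card_doubletons_containing[of "insert j0 R" j0] by (simp add: R_def)
  moreover have "2 * card ?S2 \<le> card R * (w - 1)"
    by (rule card_pairs_in_clusters) (auto simp: R_def length_ps w_def y_def intro!: heaviest)
  moreover have "card R * (w + 1) = 2 * card R + card R * (w - 1)"
    using \<open>1 \<le> w\<close> by (cases w) (simp_all add: algebra_simps)
  ultimately have "2 * card U \<le> card R * (w + 1)" by linarith
  moreover have "4 * (card R * (w + 1)) \<le> m^2"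
    using four_mult_le_square_add[of "card R" "w + 1"] \<open>card R + w + 1 = m\<close> by simp
  moreover have "card U = (m choose 2) - mu_pt L y"
    unfolding U_def by (rule card_lines_missing_point)
  ultimately show ?thesis unfolding y_def by linarith
qed

lemma exists_point_missed_by_few_lines:
  assumes "b \<noteq> 0" "j0 < m" "weight ps (ps!j0) = 1" "2 \<le> m"
    and on_b: "\<And>i. i < m \<Longrightarrow> i \<noteq> j0 \<Longrightarrow> bdot b (ps!i) = 0"
  obtains y where "y \<noteq> 0" "8 * ((m choose 2) - mu_pt L y) \<le> m^2"
proof -
  let ?wt = "\<lambda>i. weight ps (ps!i)"
  define B where "B = {..<m} - {j0}"
  have "(if j0 = 0 then 1 else 0) \<in> B" using assms(2,4) unfolding B_def by auto
  then have "B \<noteq> {}" by blast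
  have "finite B" by (simp add: B_def)
  then have "Max (?wt ` B) \<in> ?wt ` B" using \<open>B \<noteq> {}\<close> by (intro Max_in) auto
  then obtain i0 where "i0 \<in> B" and i0_max: "?wt i0 = Max (?wt ` B)" by auto
  then have i0: "i0 < m" "i0 \<noteq> j0" unfolding B_def by auto
  have heaviest: "?wt i \<le> ?wt i0" if "i < m" "i \<noteq> j0" for i
  proof -
    have "i \<in> B" using that B_def by simp
    then show ?thesis using \<open>finite B\<close> i0_max by simp
  qed
  have "\<not> proj_eq (ps!i0) (ps!j0)"
  proof
    assume "proj_eq (ps!i0) (ps!j0)"
    then have "2 \<le> ?wt j0"
      using weight_nth_ge_2[of j0 ps i0] proj_eq_sym i0(1,2) assms(2) length_ps by simp
    then show False using assms(3) by simp
  qed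
  then show ?thesis
    using that few_lines_miss_heaviest_marking[OF assms(1,2) i0(1,2) _ on_b heaviest]
      marking_nonzero[OF i0(1)] by blast
qed

end

section \<open>Integral support with distinct markings\<close>

locale integral_chord_labelling = chord_labelling +
  fixes A :: "complex^3^3"
  assumes conic_symmetric: "transpose A = A"
    and marking_on_conic: "i < m \<Longrightarrow> qf A (ps!i) = 0"
    and conic_integral: "integral_conic A"
    and markings_distinct: "i < m \<Longrightarrow> k < m \<Longrightarrow> i \<noteq> k \<Longrightarrow> \<not> proj_eq (ps!i) (ps!k)"
begin

lemma no_three_markings_collinear:
  assumes "l \<noteq> 0" "a < m" "b < m" "c < m" "a \<noteq> b" "a \<noteq> c" "b \<noteq> c"
    and "bdot l (ps!a) = 0" "bdot l (ps!b) = 0" "bdot l (ps!c) = 0"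
  shows False
  using collinear_points_on_conic_not_integral[OF conic_symmetric
      marking_on_conic[OF assms(2)] marking_on_conic[OF assms(3)] marking_on_conic[OF assms(4)]
      marking_nonzero[OF assms(2)] marking_nonzero[OF assms(3)] marking_nonzero[OF assms(4)]
      markings_distinct[OF assms(2,3,5)] markings_distinct[OF assms(2,4,6)]
      markings_distinct[OF assms(3,4,7)] assms(1,8-10)]
    conic_integral by blast

lemma mu_line_le_1:
  assumes "l \<noteq> 0"
  shows "mu_line L l \<le> 1"
proof -
  define J where "J = {j. j < length L \<and> proj_eq l (L!j)}"
  have on_l: "bdot l (ps!i) = 0" if "j \<in> J" "i \<in> \<tau> j" for j i
  proof -
    have "j < m choose 2" "proj_eq l (L!j)" using that(1) length_L unfolding J_def by auto
    then show ?thesis using label_incident that(2) proj_eq_bdot_left by blast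
  qed
  have "j1 = j2" if "j1 \<in> J" "j2 \<in> J" for j1 j2
  proof (rule ccontr)
    assume "j1 \<noteq> j2"
    have j: "j1 < m choose 2" "j2 < m choose 2" using that length_L unfolding J_def by auto
    then have "\<tau> j1 \<noteq> \<tau> j2" using inj_label \<open>j1 \<noteq> j2\<close> by (auto dest: inj_onD)
    obtain a b where ab: "\<tau> j1 = {a, b}" "a \<noteq> b" "a < m" "b < m"
      by (rule label_doubletonE[OF j(1)])
    have "card (\<tau> j2) = card (\<tau> j1)"
      using label_in_doubletons[OF j(1)] label_in_doubletons[OF j(2)] by (simp add: doubletons_def)
    then have "\<not> \<tau> j2 \<subseteq> \<tau> j1"
      using card_subset_eq[of "\<tau> j1" "\<tau> j2"] ab(1) \<open>\<tau> j1 \<noteq> \<tau> j2\<close> by auto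
    then obtain c where "c \<in> \<tau> j2" "c \<notin> \<tau> j1" by blast
    then show False
      using no_three_markings_collinear[OF assms ab(3,4), of c] ab on_l[OF that(1)] on_l[OF that(2)]
        label_in_doubletons[OF j(2)] by (auto simp: doubletons_def)
  qed
  then have "card J \<le> 1" using card_le_Suc0_iff_eq[of J] unfolding J_def by auto
  then show ?thesis unfolding mu_line_def J_def .
qed

text \<open>The line through \<open>x\<close> and the marking \<open>i\<close> contains no other marking.\<close>
lemma unique_line_through_point_and_marking:
  assumes "x \<noteq> 0" "\<not> proj_eq x (ps!i)" "j1 < m choose 2" "j2 < m choose 2"
    and "i \<in> \<tau> j1" "i \<in> \<tau> j2" "bdot (L!j1) x = 0" "bdot (L!j2) x = 0"
  shows "j1 = j2"
proof (rule ccontr)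
  assume "j1 \<noteq> j2"
  obtain k1 where k1: "\<tau> j1 = {i, k1}" "i \<noteq> k1" "i < m" "k1 < m" using labelE[OF assms(3,5)] by blast
  obtain k2 where k2: "\<tau> j2 = {i, k2}" "i \<noteq> k2" "k2 < m" using labelE[OF assms(4,6)] by blast
  have "k1 \<noteq> k2" using inj_label \<open>j1 \<noteq> j2\<close> k1(1) k2(1) assms(3,4) by (auto dest: inj_onD)
  have "\<not> proj_eq (ps!i) x" using assms(2) proj_eq_sym by metis
  define l where "l = cross3 (ps!i) x"
  have "l \<noteq> 0"
    unfolding l_def by (rule cross3_nonzero[OF marking_nonzero[OF k1(3)] assms(1) \<open>\<not> proj_eq (ps!i) x\<close>])
  have on_l: "bdot l (ps!k) = 0" if j: "j < m choose 2" "\<tau> j = {i, k}" "bdot (L!j) x = 0" for j k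
  proof -
    have "bdot (L!j) (ps!i) = 0" "bdot (L!j) (ps!k) = 0" using label_incident[OF j(1)] j(2) by simp_all
    have "proj_eq (L!j) l"
      unfolding l_def by (rule line_through_two_points[OF line_nonzero[OF j(1)]
            \<open>bdot (L!j) (ps!i) = 0\<close> j(3) marking_nonzero[OF k1(3)] assms(1) \<open>\<not> proj_eq (ps!i) x\<close>])
    then show ?thesis using proj_eq_bdot_left \<open>bdot (L!j) (ps!k) = 0\<close> by blast
  qed
  have "bdot l (ps!i) = 0" unfolding l_def by (rule bdot_cross3_left)
  then show False
    by (rule no_three_markings_collinear[OF \<open>l \<noteq> 0\<close> k1(3,4) k2(3) k1(2) k2(2) \<open>k1 \<noteq> k2\<close> _
          on_l[OF assms(3) k1(1) assms(7)] on_l[OF assms(4) k2(1) assms(8)]])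
qed

lemma card_lines_through_point_off_markings:
  assumes "x \<noteq> 0"
  shows "2 * card {j. j < m choose 2 \<and> bdot (L!j) x = 0 \<and> (\<forall>i\<in>\<tau> j. \<not> proj_eq x (ps!i))} \<le> m"
proof -
  define J where "J = {j. j < m choose 2 \<and> bdot (L!j) x = 0 \<and> (\<forall>i\<in>\<tau> j. \<not> proj_eq x (ps!i))}"
  have "card {e \<in> \<tau> ` J. i \<in> e} \<le> 1" for i
  proof -
    have fin: "finite {j \<in> J. i \<in> \<tau> j}" by (simp add: J_def)
    have "card {j \<in> J. i \<in> \<tau> j} \<le> Suc 0"
      unfolding card_le_Suc0_iff_eq[OF fin]
    proof (intro ballI)
      fix j1 j2 assume "j1 \<in> {j \<in> J. i \<in> \<tau> j}" "j2 \<in> {j \<in> J. i \<in> \<tau> j}"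
      then have j: "j1 < m choose 2" "j2 < m choose 2" "i \<in> \<tau> j1" "i \<in> \<tau> j2"
        "bdot (L!j1) x = 0" "bdot (L!j2) x = 0" "\<not> proj_eq x (ps!i)"
        unfolding J_def by auto
      show "j1 = j2" by (rule unique_line_through_point_and_marking[OF assms j(7,1,2,3,4,5,6)])
    qed
    moreover have "{e \<in> \<tau> ` J. i \<in> e} = \<tau> ` {j \<in> J. i \<in> \<tau> j}" by auto
    ultimately show ?thesis using card_image_le[OF fin, of \<tau>] by simp
  qed
  then have "2 * card (\<tau> ` J) \<le> card {..<m} * 1"
    by (intro card_doubletons_degree_bound) (auto simp: J_def label_in_doubletons)
  moreover have "card (\<tau> ` J) = card J" by (rule card_image_label) (auto simp: J_def)
  ultimately show ?thesis unfolding J_def by simp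
qed

lemma mu_pt_le:
  assumes "x \<noteq> 0"
  shows "2 * mu_pt L x \<le> 3 * m"
proof -
  define J1 where "J1 = {j. j < m choose 2 \<and> (\<exists>i\<in>\<tau> j. proj_eq x (ps!i))}"
  define J2 where "J2 = {j. j < m choose 2 \<and> bdot (L!j) x = 0 \<and> (\<forall>i\<in>\<tau> j. \<not> proj_eq x (ps!i))}"
  have "card J1 \<le> m"
  proof (cases "J1 = {}")
    case False
    then obtain j i where "j < m choose 2" "i \<in> \<tau> j" "proj_eq x (ps!i)" unfolding J1_def by auto
    then have "i < m" by (auto elim: labelE)
    have "J1 \<subseteq> {j. j < m choose 2 \<and> i \<in> \<tau> j}"
    proof
      fix j' assume "j' \<in> J1"
      then obtain i' where i': "j' < m choose 2" "i' \<in> \<tau> j'" "proj_eq x (ps!i')"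
        unfolding J1_def by auto
      then have "i' < m" by (auto elim: labelE)
      have "proj_eq (ps!i) (ps!i')" by (rule proj_eq_trans[OF proj_eq_sym i'(3)]) fact
      then have "i' = i" using markings_distinct[OF \<open>i < m\<close> \<open>i' < m\<close>] by auto
      then show "j' \<in> {j. j < m choose 2 \<and> i \<in> \<tau> j}" using i' by simp
    qed
    then have "card J1 \<le> card {j. j < m choose 2 \<and> i \<in> \<tau> j}" by (intro card_mono) auto
    then show ?thesis using card_labels_containing[OF \<open>i < m\<close>] by simp
  qed simp
  moreover have "2 * card J2 \<le> m" unfolding J2_def by (rule card_lines_through_point_off_markings[OF assms])
  moreover have "mu_pt L x \<le> card J1 + card J2"
  proof -
    have "{j. j < length L \<and> bdot (L!j) x = 0} \<subseteq> J1 \<union> J2"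
      unfolding J1_def J2_def length_L by auto
    then have "mu_pt L x \<le> card (J1 \<union> J2)"
      unfolding mu_pt_def by (intro card_mono) (auto simp: J1_def J2_def)
    then show ?thesis using card_Un_le[of J1 J2] by linarith
  qed
  ultimately show ?thesis by linarith
qed

text \<open>Two coinciding markings of another preimage would lie on \<open>2m - 3 > 3m/2\<close> lines of \<open>L\<close>.\<close>
lemma other_labelling_markings_distinct:
  assumes "7 \<le> m" "chord_labelling m ps' L \<tau>'" "i < m" "k < m" "i \<noteq> k"
  shows "\<not> proj_eq (ps'!i) (ps'!k)"
proof
  assume "proj_eq (ps'!i) (ps'!k)"
  interpret other: chord_labelling m ps' L \<tau>' by (fact assms(2))
  have "2 \<le> weight ps' (ps'!i)"
    using weight_nth_ge_2[of i ps' k] assms(3-5) other.length_ps \<open>proj_eq (ps'!i) (ps'!k)\<close> by simp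
  then have "m - weight ps' (ps'!i) \<le> m - 2" by simp
  then have "(m choose 2) - ((m - 2) choose 2) \<le> mu_pt L (ps'!i)"
    using other.mu_pt_ge_cluster[of "ps'!i"] binomial_right_mono[of _ _ 2] by (meson diff_le_mono2 le_trans)
  moreover have "2 * mu_pt L (ps'!i) \<le> 3 * m" by (rule mu_pt_le[OF other.marking_nonzero[OF assms(3)]])
  ultimately show False using double_marking_arith[OF assms(1)] by linarith
qed

lemma other_labelling_conic_integral:
  assumes "7 \<le> m" "chord_labelling m ps' L \<tau>'"
    and "transpose A' = A'" "A' \<noteq> 0" "\<And>i. i < m \<Longrightarrow> qf A' (ps'!i) = 0"
  shows "integral_conic A'"
proof (rule ccontr)
  assume "\<not> integral_conic A'"
  then obtain a b where factor: "\<And>x. qf A' x = bdot a x * bdot b x"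
    unfolding integral_conic_def by blast
  interpret other: chord_labelling m ps' L \<tau>' by (fact assms(2))
  have few_on_line: "card {i. i < m \<and> bdot l (ps'!i) = 0} < 3" if "l \<noteq> 0" for l
  proof (rule ccontr)
    assume "\<not> card {i. i < m \<and> bdot l (ps'!i) = 0} < 3"
    then obtain T where "T \<subseteq> {i. i < m \<and> bdot l (ps'!i) = 0}" "card T = 3"
      by (meson not_less obtain_subset_with_card_n)
    then obtain i j k where "i < m" "j < m" "k < m" "i \<noteq> j" "i \<noteq> k" "j \<noteq> k"
      "bdot l (ps'!i) = 0" "bdot l (ps'!j) = 0" "bdot l (ps'!k) = 0"
      unfolding card_3_iff by auto
    then have "2 \<le> mu_line L l"
      using other.mu_line_ge_2[OF that] other_labelling_markings_distinct[OF assms(1,2)] by blast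
    then show False using mu_line_le_1[OF that] by simp
  qed
  have "a \<noteq> 0" using line_factor_nonzero[OF assms(3,4)] factor by blast
  moreover have "b \<noteq> 0" using line_factor_nonzero[OF assms(3,4), of b a] factor by (simp add: mult.commute)
  moreover have "m \<le> card {i. i < m \<and> bdot a (ps'!i) = 0} + card {i. i < m \<and> bdot b (ps'!i) = 0}"
  proof -
    have "{..<m} \<subseteq> {i. i < m \<and> bdot a (ps'!i) = 0} \<union> {i. i < m \<and> bdot b (ps'!i) = 0}"
      using assms(5) factor by auto
    then have "card {..<m} \<le> card ({i. i < m \<and> bdot a (ps'!i) = 0} \<union> {i. i < m \<and> bdot b (ps'!i) = 0})"
      by (intro card_mono) auto
    then show ?thesis using card_Un_le order_trans by fastforce
  qed
  ultimately show False using few_on_line[of a] few_on_line[of b] assms(1) by linarith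
qed

end

lemma heavy_marking_not_semistable:
  assumes "Gamma_psi (2*g+2) A ps L" "p \<in> set ps" "g + 1 \<le> weight ps p"
  shows "\<not> semistable L"
proof -
  obtain \<tau> where "chord_labelling (2*g+2) ps L \<tau>" by (rule Gamma_psi_chord_labelling[OF assms(1)])
  then interpret chord_labelling "2*g+2" ps L \<tau> .
  obtain i where "i < 2*g+2" "ps!i = p" using assms(2) length_ps by (metis in_set_conv_nth)
  then have "p \<noteq> 0" using marking_nonzero by blast
  have "(2*g+2) - weight ps p \<le> g + 1" using assms(3) by simp
  then have "((2*g+2) choose 2) - ((g+1) choose 2) \<le> mu_pt L p"
    using mu_pt_ge_cluster[of p] binomial_right_mono[of _ _ 2] by (meson diff_le_mono2 le_trans)
  then have "2 * length L < 3 * mu_pt L p" using heavy_marking_arith[of g] length_L by linarith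
  then show ?thesis using \<open>p \<noteq> 0\<close> unfolding semistable_def by fastforce
qed

lemma isolated_marking_not_semistable:
  assumes "2 \<le> g" "Gamma_psi (2*g+2) A ps L" "line_pair A a b"
    and "j0 < length ps" "weight ps (ps!j0) = 1"
    and off_b: "\<And>i. i < length ps \<Longrightarrow> bdot a (ps!i) = 0 \<Longrightarrow> bdot b (ps!i) \<noteq> 0
      \<Longrightarrow> proj_eq (ps!j0) (ps!i)"
  shows "\<not> semistable L"
proof -
  obtain \<tau> where "chord_labelling (2*g+2) ps L \<tau>" by (rule Gamma_psi_chord_labelling[OF assms(2)])
  then interpret chord_labelling "2*g+2" ps L \<tau> .
  have "b \<noteq> 0" and factor: "\<And>x. qf A x = bdot a x * bdot b x"
    using assms(3) unfolding line_pair_def by auto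
  have on_b: "bdot b (ps!i) = 0" if "i < 2*g+2" "i \<noteq> j0" for i
  proof (rule ccontr)
    assume "bdot b (ps!i) \<noteq> 0"
    moreover have "qf A (ps!i) = 0" using Gamma_psi_markings_on_conic(3)[OF assms(2) that(1)] .
    ultimately have "bdot a (ps!i) = 0" using factor by simp
    then have "proj_eq (ps!j0) (ps!i)" using off_b \<open>bdot b (ps!i) \<noteq> 0\<close> that(1) length_ps by simp
    then have "2 \<le> weight ps (ps!j0)" using weight_nth_ge_2[of j0 ps i] assms(4) that length_ps by simp
    then show False using assms(5) by simp
  qed
  obtain y where "y \<noteq> 0" "8 * (((2*g+2) choose 2) - mu_pt L y) \<le> (2*g+2)^2"
    using exists_point_missed_by_few_lines[OF \<open>b \<noteq> 0\<close> _ assms(5) _ on_b] assms(4) length_ps by auto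
  moreover from this have "2 * length L < 3 * mu_pt L y"
    using isolated_marking_arith[of "2*g+2"] length_L assms(1) by simp
  ultimately show ?thesis unfolding semistable_def by fastforce
qed

lemma generic_in_V:
  assumes "3 \<le> g" "Gamma_psi (2*g+2) A ps L" "integral_conic A" "\<And>p. p \<in> set ps \<Longrightarrow> weight ps p = 1"
  shows "in_V (2*g+2) L"
proof -
  obtain \<tau> where labelling: "chord_labelling (2*g+2) ps L \<tau>" by (rule Gamma_psi_chord_labelling[OF assms(2)])
  have "length ps = 2*g+2" using chord_labelling.length_ps[OF labelling] .
  have "\<not> proj_eq (ps!i) (ps!k)" if "i < 2*g+2" "k < 2*g+2" "i \<noteq> k" for i k
    using weight_nth_ge_2[of i ps k] assms(4)[of "ps!i"] that \<open>length ps = 2*g+2\<close> by auto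
  then interpret integral_chord_labelling "2*g+2" ps L \<tau> A
    using labelling Gamma_psi_markings_on_conic[OF assms(2)] assms(3)
    by (intro integral_chord_labelling.intro integral_chord_labelling_axioms.intro) auto
  have "semistable L"
    unfolding semistable_def
  proof (intro conjI allI impI)
    fix x :: "complex^3" assume "x \<noteq> 0"
    then show "3 * mu_pt L x \<le> 2 * length L"
      using generic_mu_pt_arith[OF _ mu_pt_le] length_L assms(1) by simp
  next
    fix l :: "complex^3" assume "l \<noteq> 0"
    have "3 \<le> length L" using generic_mu_pt_arith[of "2*g+2" 2] length_L assms(1) by simp
    then show "3 * mu_line L l \<le> length L" using mu_line_le_1[OF \<open>l \<noteq> 0\<close>] by linarith
  qed
  moreover have "integral_conic A'" if preimage: "Gamma_psi (2*g+2) A' ps' L" for A' ps'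
  proof -
    obtain \<tau>' where "chord_labelling (2*g+2) ps' L \<tau>'"
      by (rule Gamma_psi_chord_labelling[OF preimage])
    then show ?thesis
      using other_labelling_conic_integral Gamma_psi_markings_on_conic[OF preimage] assms(1) by simp
  qed
  ultimately show ?thesis unfolding in_V_def using assms(2) by blast
qed

theorem lemma3p1:
  fixes g :: nat and A :: "complex^3^3" and ps L :: "(complex^3) list"
  assumes "g \<ge> 3"
    and "Gamma_psi (2*g+2) A ps L"
  shows "((\<exists>p\<in>set ps. weight ps p \<ge> g + 1) \<longrightarrow> \<not> semistable L)
       \<and> ((reducible_conic A \<and>
           (\<exists>a b. line_pair A a b \<and>
              (\<exists>j<length ps. bdot a (ps!j) = 0 \<and> bdot b (ps!j) \<noteq> 0 \<and> weight ps (ps!j) = 1 \<and>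
                 (\<forall>i<length ps. bdot a (ps!i) = 0 \<and> bdot b (ps!i) \<noteq> 0
                      \<longrightarrow> proj_eq (ps!j) (ps!i)))))
          \<longrightarrow> \<not> semistable L)
       \<and> ((integral_conic A \<and> (\<forall>p\<in>set ps. weight ps p = 1)) \<longrightarrow> in_V (2*g+2) L)"
proof (intro conjI impI)
  assume "\<exists>p\<in>set ps. weight ps p \<ge> g + 1"
  then show "\<not> semistable L" using heavy_marking_not_semistable[OF assms(2)] by blast
next
  assume "reducible_conic A \<and>
           (\<exists>a b. line_pair A a b \<and>
              (\<exists>j<length ps. bdot a (ps!j) = 0 \<and> bdot b (ps!j) \<noteq> 0 \<and> weight ps (ps!j) = 1 \<and>
                 (\<forall>i<length ps. bdot a (ps!i) = 0 \<and> bdot b (ps!i) \<noteq> 0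
                      \<longrightarrow> proj_eq (ps!j) (ps!i))))"
  then obtain a b j where "line_pair A a b" "j < length ps" "weight ps (ps!j) = 1"
    "\<forall>i<length ps. bdot a (ps!i) = 0 \<and> bdot b (ps!i) \<noteq> 0 \<longrightarrow> proj_eq (ps!j) (ps!i)"
    by blast
  then show "\<not> semistable L"
    using isolated_marking_not_semistable[OF _ assms(2)] assms(1) by simp
next
  assume "integral_conic A \<and> (\<forall>p\<in>set ps. weight ps p = 1)"
  then show "in_V (2*g+2) L" using generic_in_V[OF assms] by blast
qed

end
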